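(* Let $G$ be a finite GVZ-group with $|\mathrm{cd}(G)|=2$. Let $N$ be a normal subgroup of $G$ and $\chi\in\mathrm{nl}(G)$ such that $G'\not\subseteq N$ and $[Z(\chi),G]\subseteq N$. Then $N\subseteq Z(\chi)$.
   Context: All groups are finite. $\mathrm{Irr}(G)$ is the set of complex irreducible characters of $G$, $\mathrm{nl}(G)$ the set of non-linear irreducible characters, and $\mathrm{cd}(G)=\{\chi(1):\chi\in\mathrm{Irr}(G)\}$. For a character $\chi$, $Z(\chi)=\{g\in G: |\chi(g)|=\chi(1)\}$. A nonabelian group $G$ is a GVZ-group if for every $\chi\in\mathrm{Irr}(G)$ we have $\chi(g)=0$ for all $g\in G\setminus Z(\chi)$. *)

theory Defs
  imports "HOL-Algebra.Solvable_Groups" "Jordan_Normal_Form.Matrix"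
begin

definition mat_trace :: "complex mat \<Rightarrow> complex" where
  "mat_trace A = (\<Sum>i<dim_row A. A $$ (i,i))"

definition is_rep :: "('g, 'b) monoid_scheme \<Rightarrow> nat \<Rightarrow> ('g \<Rightarrow> complex mat) \<Rightarrow> bool" where
  "is_rep G n \<rho> \<longleftrightarrow> n > 0 \<and> (\<forall>g \<in> carrier G. \<rho> g \<in> carrier_mat n n)
     \<and> \<rho> \<one>\<^bsub>G\<^esub> = 1\<^sub>m n
     \<and> (\<forall>g \<in> carrier G. \<forall>h \<in> carrier G. \<rho> (g \<otimes>\<^bsub>G\<^esub> h) = \<rho> g * \<rho> h)"

definition is_subspace :: "nat \<Rightarrow> complex vec set \<Rightarrow> bool" where
  "is_subspace n W \<longleftrightarrow> W \<subseteq> carrier_vec n \<and> 0\<^sub>v n \<in> W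
     \<and> (\<forall>v \<in> W. \<forall>w \<in> W. v + w \<in> W) \<and> (\<forall>c. \<forall>v \<in> W. c \<cdot>\<^sub>v v \<in> W)"

definition is_irr_rep :: "('g, 'b) monoid_scheme \<Rightarrow> nat \<Rightarrow> ('g \<Rightarrow> complex mat) \<Rightarrow> bool" where
  "is_irr_rep G n \<rho> \<longleftrightarrow> is_rep G n \<rho> \<and>
     \<not> (\<exists>W. is_subspace n W \<and> W \<noteq> {0\<^sub>v n} \<and> W \<noteq> carrier_vec n
            \<and> (\<forall>g \<in> carrier G. \<forall>w \<in> W. \<rho> g *\<^sub>v w \<in> W))"

definition character_of :: "('g, 'b) monoid_scheme \<Rightarrow> ('g \<Rightarrow> complex mat) \<Rightarrow> 'g \<Rightarrow> complex" where
  "character_of G \<rho> = (\<lambda>g. if g \<in> carrier G then mat_trace (\<rho> g) else 0)"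

definition Irr :: "('g, 'b) monoid_scheme \<Rightarrow> ('g \<Rightarrow> complex) set" where
  "Irr G = {\<chi>. \<exists>n \<rho>. is_irr_rep G n \<rho> \<and> \<chi> = character_of G \<rho>}"

definition nl :: "('g, 'b) monoid_scheme \<Rightarrow> ('g \<Rightarrow> complex) set" where
  "nl G = {\<chi> \<in> Irr G. \<chi> \<one>\<^bsub>G\<^esub> \<noteq> 1}"

definition cd :: "('g, 'b) monoid_scheme \<Rightarrow> complex set" where
  "cd G = (\<lambda>\<chi>. \<chi> \<one>\<^bsub>G\<^esub>) ` Irr G"

definition char_center :: "('g, 'b) monoid_scheme \<Rightarrow> ('g \<Rightarrow> complex) \<Rightarrow> 'g set" where
  "char_center G \<chi> = {g \<in> carrier G. cmod (\<chi> g) = cmod (\<chi> \<one>\<^bsub>G\<^esub>)}"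

definition GVZ :: "('g, 'b) monoid_scheme \<Rightarrow> bool" where
  "GVZ G \<longleftrightarrow> (\<exists>x \<in> carrier G. \<exists>y \<in> carrier G. x \<otimes>\<^bsub>G\<^esub> y \<noteq> y \<otimes>\<^bsub>G\<^esub> x)
     \<and> (\<forall>\<chi> \<in> Irr G. \<forall>g \<in> carrier G - char_center G \<chi>. \<chi> g = 0)"

definition comm_subgroup :: "('g, 'b) monoid_scheme \<Rightarrow> 'g set \<Rightarrow> 'g set \<Rightarrow> 'g set" where
  "comm_subgroup G A B = generate G
     (\<Union>a \<in> A. \<Union>b \<in> B. {a \<otimes>\<^bsub>G\<^esub> b \<otimes>\<^bsub>G\<^esub> inv\<^bsub>G\<^esub> a \<otimes>\<^bsub>G\<^esub> inv\<^bsub>G\<^esub> b})"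

end

(*
  Since G' is not contained in N, the regular representation of G/N, viewed as a representation
  of G, has N in its kernel and non-abelian image. By complete reducibility (the orthogonal
  complement of an invariant subspace for a G-invariant positive definite Hermitian form is again
  invariant) it has an irreducible constituent tau with the same two properties. Then tau is
  non-linear, so cd(G) = {1, chi(1)} forces deg tau = chi(1) = n. In a GVZ-group the first
  orthogonality relation gives |Z(psi)| n^2 = |G| for every psi in Irr(G) of degree n, hence
  |Z(chi)| = |Z(psi)| for the character psi of tau. For z in Z(chi) all commutators [z, g] lie in
  N, which acts trivially under tau, so tau(z) commutes with tau(G) and Schur's lemma puts z into
  Z(psi). Therefore Z(chi) = Z(psi), which contains the kernel of tau and thus N.
*)

theory Submission
  imports Defs "Jordan_Normal_Form.DL_Rank" "Jordan_Normal_Form.Spectral_Radius"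
begin

lemma dim_mat_adjoint [simp]:
  "dim_row (mat_adjoint A) = dim_col A" "dim_col (mat_adjoint A) = dim_row A"
  unfolding mat_adjoint_def by simp_all

lemma index_mat_adjoint [simp]:
  assumes "i < dim_col A" "j < dim_row A"
  shows "mat_adjoint (A :: complex mat) $$ (i, j) = cnj (A $$ (j, i))"
proof -
  have "mat_adjoint A $$ (i, j) = conjugate (col A i) $ j"
    unfolding mat_adjoint_def using assms by (subst mat_of_rows_index) simp_all
  then show ?thesis using assms by simp
qed

lemma mat_adjoint_adjoint [simp]: "mat_adjoint (mat_adjoint (A :: complex mat)) = A"
  by (rule eq_matI) simp_all

lemma mat_adjoint_carrier [simp]: "A \<in> carrier_mat n m \<Longrightarrow> mat_adjoint A \<in> carrier_mat m n"
  by (intro carrier_matI) auto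

lemma index_mult_mat_sum:
  "A \<in> carrier_mat n m \<Longrightarrow> B \<in> carrier_mat m k \<Longrightarrow> i < n \<Longrightarrow> j < k \<Longrightarrow>
    (A * B) $$ (i, j) = (\<Sum>l<m. A $$ (i, l) * B $$ (l, j))"
  by (simp add: scalar_prod_def atLeast0LessThan)

lemma index_mult_mat_vec_sum:
  "A \<in> carrier_mat n m \<Longrightarrow> x \<in> carrier_vec m \<Longrightarrow> i < n \<Longrightarrow>
    (A *\<^sub>v x) $ i = (\<Sum>j<m. A $$ (i, j) * x $ j)"
  by (simp add: scalar_prod_def atLeast0LessThan)

lemma mat_adjoint_mult:
  assumes "A \<in> carrier_mat n m" "B \<in> carrier_mat m k"
  shows "mat_adjoint (A * B) = mat_adjoint B * mat_adjoint (A :: complex mat)"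
proof (rule eq_matI)
  fix i j assume "i < dim_row (mat_adjoint B * mat_adjoint A)" "j < dim_col (mat_adjoint B * mat_adjoint A)"
  with assms have i: "i < k" and j: "j < n" by auto
  have "mat_adjoint (A * B) $$ (i, j) = cnj (\<Sum>l<m. A $$ (j, l) * B $$ (l, i))"
    using assms i j by (simp add: scalar_prod_def atLeast0LessThan)
  also have "\<dots> = (\<Sum>l<m. cnj (B $$ (l, i)) * cnj (A $$ (j, l)))"
    by (simp add: mult.commute)
  also have "\<dots> = (mat_adjoint B * mat_adjoint A) $$ (i, j)"
    using assms i j by (simp add: scalar_prod_def atLeast0LessThan)
  finally show "mat_adjoint (A * B) $$ (i, j) = (mat_adjoint B * mat_adjoint A) $$ (i, j)" .
qed (use assms in auto)

lemma scalar_prod_mat_adjoint: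
  assumes "A \<in> carrier_mat n m" "u \<in> carrier_vec n" "v \<in> carrier_vec m"
  shows "conjugate u \<bullet> (A *\<^sub>v v) = conjugate (mat_adjoint A *\<^sub>v u) \<bullet> (v :: complex vec)"
proof -
  have "conjugate u \<bullet> (A *\<^sub>v v) = (\<Sum>i<n. cnj (u $ i) * (\<Sum>j<m. A $$ (i, j) * v $ j))"
    using assms by (simp add: scalar_prod_def atLeast0LessThan)
  also have "\<dots> = (\<Sum>j<m. \<Sum>i<n. cnj (u $ i) * A $$ (i, j) * v $ j)"
    by (simp add: sum_distrib_left mult.assoc sum.swap[of _ "{..<m}"])
  also have "\<dots> = (\<Sum>j<m. cnj (\<Sum>i<n. cnj (A $$ (i, j)) * u $ i) * v $ j)"
    by (simp add: sum_distrib_left sum_distrib_right mult_ac)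
  also have "\<dots> = conjugate (mat_adjoint A *\<^sub>v u) \<bullet> v"
    using assms by (simp add: scalar_prod_def atLeast0LessThan)
  finally show ?thesis .
qed

lemma conjugate_scalar_prod_self_nonneg:
  "w \<in> carrier_vec n \<Longrightarrow> conjugate w \<bullet> (w :: complex vec) \<ge> 0"
  using conjugate_vec_sprod_comm[of w n w] conjugate_square_ge_0_vec[of w] by simp

lemma conjugate_scalar_prod_self_eq_0:
  "w \<in> carrier_vec n \<Longrightarrow> conjugate w \<bullet> (w :: complex vec) = 0 \<Longrightarrow> w = 0\<^sub>v n"
  using conjugate_vec_sprod_comm[of w n w] conjugate_square_eq_0_vec[of w n] by simp

lemma eq_mat_by_mult_vec:
  assumes "A \<in> carrier_mat n m" "B \<in> carrier_mat n m"
    and "\<And>v. v \<in> carrier_vec m \<Longrightarrow> A *\<^sub>v v = B *\<^sub>v (v :: 'a :: semiring_1 vec)"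
  shows "A = B"
proof (rule eq_matI)
  fix i j assume i: "i < dim_row B" and j: "j < dim_col B"
  have "(A *\<^sub>v unit_vec m j) $ i = (B *\<^sub>v unit_vec m j) $ i" using assms(3) by simp
  then show "A $$ (i, j) = B $$ (i, j)" using assms(1,2) i j by simp
qed (use assms in auto)

lemma invertible_of_trivial_kernel:
  assumes A: "(A :: complex mat) \<in> carrier_mat n n"
    and ker: "\<And>v. v \<in> carrier_vec n \<Longrightarrow> A *\<^sub>v v = 0\<^sub>v n \<Longrightarrow> v = 0\<^sub>v n"
  obtains B where "B \<in> carrier_mat n n" "A * B = 1\<^sub>m n" "B * A = 1\<^sub>m n"
proof -
  have "det A \<noteq> 0" using det_0_iff_vec_prod_zero_field[OF A] ker by auto
  from det_non_zero_imp_unit[OF A this] show ?thesis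
    using that unfolding Units_def by (auto simp: ring_mat_def)
qed

lemma smult_one_mat_mult_vec: "v \<in> carrier_vec n \<Longrightarrow> (c \<cdot>\<^sub>m 1\<^sub>m n) *\<^sub>v v = (c :: complex) \<cdot>\<^sub>v v"
  by (intro eq_vecI) (simp_all add: index_mult_mat_vec_sum[of _ n n] sum.delta)

lemma mat_trace_one [simp]: "mat_trace (1\<^sub>m n) = of_nat n"
  by (simp add: mat_trace_def)

lemma mat_trace_smult: "A \<in> carrier_mat n n \<Longrightarrow> mat_trace (c \<cdot>\<^sub>m A) = c * mat_trace A"
  unfolding mat_trace_def by (simp add: sum_distrib_left)

lemma mat_trace_smult_one [simp]: "mat_trace (c \<cdot>\<^sub>m 1\<^sub>m n) = c * of_nat n"
  by (simp add: mat_trace_def)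

lemma mat_trace_adjoint: "A \<in> carrier_mat n n \<Longrightarrow> mat_trace (mat_adjoint A) = cnj (mat_trace A)"
  unfolding mat_trace_def carrier_mat_def by simp

lemma mat_trace_mult_comm:
  assumes "A \<in> carrier_mat n m" "B \<in> carrier_mat m n"
  shows "mat_trace (A * B) = mat_trace (B * A)"
proof -
  have "mat_trace (A * B) = (\<Sum>i<n. \<Sum>j<m. A $$ (i, j) * B $$ (j, i))"
    using assms by (auto simp: mat_trace_def scalar_prod_def atLeast0LessThan)
  also have "\<dots> = (\<Sum>j<m. \<Sum>i<n. B $$ (j, i) * A $$ (i, j))"
    by (subst sum.swap) (simp add: mult.commute)
  also have "\<dots> = mat_trace (B * A)"
    using assms by (auto simp: mat_trace_def scalar_prod_def atLeast0LessThan)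
  finally show ?thesis .
qed

definition mat_unit :: "nat \<Rightarrow> nat \<Rightarrow> nat \<Rightarrow> complex mat" where
  "mat_unit n i k = mat n n (\<lambda>(a, b). if a = i \<and> b = k then 1 else 0)"

lemma mat_unit_carrier [simp]: "mat_unit n i k \<in> carrier_mat n n"
  unfolding mat_unit_def carrier_mat_def by simp

lemma mat_trace_mat_unit: "i < n \<Longrightarrow> mat_trace (mat_unit n i k) = (if i = k then 1 else 0)"
  unfolding mat_unit_def mat_trace_def by (simp add: sum.delta)

lemma index_mult_mat_unit_mult:
  assumes A: "A \<in> carrier_mat n n" and B: "B \<in> carrier_mat n n"
    and i: "i < n" and k: "k < n" and a: "a < n" and b: "b < n"
  shows "(A * mat_unit n i k * B) $$ (a, b) = A $$ (a, i) * B $$ (k, b)"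
proof -
  have AE: "(A * mat_unit n i k) $$ (a, l) = (if l = k then A $$ (a, i) else 0)" if l: "l < n" for l
  proof -
    have "(A * mat_unit n i k) $$ (a, l) = (\<Sum>m<n. A $$ (a, m) * mat_unit n i k $$ (m, l))"
      by (rule index_mult_mat_sum[OF A mat_unit_carrier a l])
    also have "\<dots> = (\<Sum>m<n. if m = i then (if l = k then A $$ (a, i) else 0) else 0)"
      using l by (intro sum.cong refl) (simp add: mat_unit_def)
    finally show ?thesis using i by (simp add: sum.delta)
  qed
  have "(A * mat_unit n i k * B) $$ (a, b) = (\<Sum>l<n. (A * mat_unit n i k) $$ (a, l) * B $$ (l, b))"
    by (rule index_mult_mat_sum[OF mult_carrier_mat[OF A mat_unit_carrier] B a b])
  also have "\<dots> = (\<Sum>l<n. if l = k then A $$ (a, i) * B $$ (k, b) else 0)"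
    by (intro sum.cong refl) (simp add: AE)
  finally show ?thesis using k by (simp add: sum.delta)
qed

definition mat_sum :: "nat \<Rightarrow> 'a set \<Rightarrow> ('a \<Rightarrow> complex mat) \<Rightarrow> complex mat" where
  "mat_sum n S f = mat n n (\<lambda>(i, j). \<Sum>g\<in>S. f g $$ (i, j))"

lemma dim_mat_sum [simp]: "dim_row (mat_sum n S f) = n" "dim_col (mat_sum n S f) = n"
  unfolding mat_sum_def by simp_all

lemma mat_sum_carrier [simp]: "mat_sum n S f \<in> carrier_mat n n"
  unfolding mat_sum_def carrier_mat_def by simp

lemma index_mat_sum [simp]: "i < n \<Longrightarrow> j < n \<Longrightarrow> mat_sum n S f $$ (i, j) = (\<Sum>g\<in>S. f g $$ (i, j))"
  unfolding mat_sum_def by simp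

lemma mat_sum_cong: "(\<And>g. g \<in> S \<Longrightarrow> f g = f' g) \<Longrightarrow> mat_sum n S f = mat_sum n S f'"
  unfolding mat_sum_def by (rule eq_matI) simp_all

lemma mat_sum_reindex_bij_betw:
  assumes "bij_betw h S S"
  shows "mat_sum n S (\<lambda>g. f (h g)) = mat_sum n S f"
proof (rule eq_matI)
  fix i j assume "i < dim_row (mat_sum n S f)" "j < dim_col (mat_sum n S f)"
  then show "mat_sum n S (\<lambda>g. f (h g)) $$ (i, j) = mat_sum n S f $$ (i, j)"
    using sum.reindex_bij_betw[OF assms, of "\<lambda>g. f g $$ (i, j)"] by simp
qed simp_all

lemma mat_sum_mult_right:
  assumes f: "\<And>g. g \<in> S \<Longrightarrow> f g \<in> carrier_mat n n" and B: "B \<in> carrier_mat n n"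
  shows "mat_sum n S f * B = mat_sum n S (\<lambda>g. f g * B)"
proof (rule eq_matI)
  fix i j assume "i < dim_row (mat_sum n S (\<lambda>g. f g * B))" "j < dim_col (mat_sum n S (\<lambda>g. f g * B))"
  then have i: "i < n" and j: "j < n" by simp_all
  have "(mat_sum n S f * B) $$ (i, j) = (\<Sum>l<n. (\<Sum>g\<in>S. f g $$ (i, l)) * B $$ (l, j))"
    using i j by (simp add: index_mult_mat_sum[OF mat_sum_carrier B])
  also have "\<dots> = (\<Sum>g\<in>S. \<Sum>l<n. f g $$ (i, l) * B $$ (l, j))"
    by (simp add: sum_distrib_right sum.swap[of _ S])
  also have "\<dots> = mat_sum n S (\<lambda>g. f g * B) $$ (i, j)"
    using i j by (simp add: index_mult_mat_sum[OF f B])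
  finally show "(mat_sum n S f * B) $$ (i, j) = mat_sum n S (\<lambda>g. f g * B) $$ (i, j)" .
qed (use B in simp_all)

lemma mat_sum_mult_left:
  assumes f: "\<And>g. g \<in> S \<Longrightarrow> f g \<in> carrier_mat n n" and B: "B \<in> carrier_mat n n"
  shows "B * mat_sum n S f = mat_sum n S (\<lambda>g. B * f g)"
proof (rule eq_matI)
  fix i j assume "i < dim_row (mat_sum n S (\<lambda>g. B * f g))" "j < dim_col (mat_sum n S (\<lambda>g. B * f g))"
  then have i: "i < n" and j: "j < n" by simp_all
  have "(B * mat_sum n S f) $$ (i, j) = (\<Sum>l<n. B $$ (i, l) * (\<Sum>g\<in>S. f g $$ (l, j)))"
    using i j by (simp add: index_mult_mat_sum[OF B mat_sum_carrier])
  also have "\<dots> = (\<Sum>g\<in>S. \<Sum>l<n. B $$ (i, l) * f g $$ (l, j))"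
    by (simp add: sum_distrib_left sum.swap[of _ S])
  also have "\<dots> = mat_sum n S (\<lambda>g. B * f g) $$ (i, j)"
    using i j by (simp add: index_mult_mat_sum[OF B f])
  finally show "(B * mat_sum n S f) $$ (i, j) = mat_sum n S (\<lambda>g. B * f g) $$ (i, j)" .
qed (use B in simp_all)

lemma mat_trace_mat_sum:
  assumes "\<And>g. g \<in> S \<Longrightarrow> f g \<in> carrier_mat n n"
  shows "mat_trace (mat_sum n S f) = (\<Sum>g\<in>S. mat_trace (f g))"
proof -
  have "mat_trace (mat_sum n S f) = (\<Sum>g\<in>S. \<Sum>i<n. f g $$ (i, i))"
    by (simp add: mat_trace_def sum.swap[of _ S])
  also have "\<dots> = (\<Sum>g\<in>S. mat_trace (f g))"
    using assms by (intro sum.cong) (auto simp: mat_trace_def)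
  finally show ?thesis .
qed

lemma scalar_prod_mat_sum_mult_vec:
  assumes f: "\<And>g. g \<in> S \<Longrightarrow> f g \<in> carrier_mat n n" and x: "x \<in> carrier_vec n"
    and y: "y \<in> carrier_vec n"
  shows "y \<bullet> (mat_sum n S f *\<^sub>v x) = (\<Sum>g\<in>S. y \<bullet> (f g *\<^sub>v x))"
proof -
  have "y \<bullet> (mat_sum n S f *\<^sub>v x) = (\<Sum>i<n. y $ i * (\<Sum>j<n. (\<Sum>g\<in>S. f g $$ (i, j)) * x $ j))"
    using x y by (simp add: scalar_prod_def atLeast0LessThan)
  also have "\<dots> = (\<Sum>g\<in>S. \<Sum>i<n. y $ i * (\<Sum>j<n. f g $$ (i, j) * x $ j))"
    by (simp add: sum_distrib_left sum_distrib_right sum.swap[of _ S] mult_ac)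
  also have "\<dots> = (\<Sum>g\<in>S. y \<bullet> (f g *\<^sub>v x))"
  proof (intro sum.cong refl)
    fix g assume "g \<in> S"
    then have "f g \<in> carrier_mat n n" by (rule f)
    with x y show "(\<Sum>i<n. y $ i * (\<Sum>j<n. f g $$ (i, j) * x $ j)) = y \<bullet> (f g *\<^sub>v x)"
      by (simp add: scalar_prod_def atLeast0LessThan)
  qed
  finally show ?thesis .
qed

section \<open>Representations of finite groups\<close>

definition rep_kernel :: "('g, 'b) monoid_scheme \<Rightarrow> nat \<Rightarrow> ('g \<Rightarrow> complex mat) \<Rightarrow> 'g set" where
  "rep_kernel G n R = {g \<in> carrier G. R g = 1\<^sub>m n}"

definition abelian_image :: "('g, 'b) monoid_scheme \<Rightarrow> ('g \<Rightarrow> complex mat) \<Rightarrow> bool" where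
  "abelian_image G R \<longleftrightarrow> (\<forall>g \<in> carrier G. \<forall>h \<in> carrier G. R g * R h = R h * R g)"

lemma is_irr_rep_is_rep: "is_irr_rep G n R \<Longrightarrow> is_rep G n R"
  unfolding is_irr_rep_def by blast

lemma character_of_eq: "g \<in> carrier G \<Longrightarrow> character_of G R g = mat_trace (R g)"
  unfolding character_of_def by simp

lemma character_of_in_Irr: "is_irr_rep G n R \<Longrightarrow> character_of G R \<in> Irr G"
  unfolding Irr_def by blast

lemma (in group) bij_betw_mult_right: "g \<in> carrier G \<Longrightarrow> bij_betw (\<lambda>h. h \<otimes> g) (carrier G) (carrier G)"
  by (rule bij_betw_byWitness[where f'="\<lambda>h. h \<otimes> inv g"]) (auto simp: m_assoc)

lemma (in group) bij_betw_mult_left: "g \<in> carrier G \<Longrightarrow> bij_betw (\<lambda>h. g \<otimes> h) (carrier G) (carrier G)"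
  by (rule bij_betw_byWitness[where f'="\<lambda>h. inv g \<otimes> h"]) (auto simp: m_assoc[symmetric])

locale finite_group_rep = group G for G :: "('g, 'b) monoid_scheme" (structure) +
  fixes n :: nat and R :: "'g \<Rightarrow> complex mat"
  assumes finite_carrier: "finite (carrier G)" and rep: "is_rep G n R"
begin

lemma degree_pos: "0 < n"
  using rep unfolding is_rep_def by blast

lemma rep_carrier [simp]: "g \<in> carrier G \<Longrightarrow> R g \<in> carrier_mat n n"
  using rep unfolding is_rep_def by blast

lemma dim_rep [simp]: "g \<in> carrier G \<Longrightarrow> dim_row (R g) = n" "g \<in> carrier G \<Longrightarrow> dim_col (R g) = n"
  using rep_carrier by blast+

lemma rep_mult_vec_carrier [simp]: "g \<in> carrier G \<Longrightarrow> v \<in> carrier_vec n \<Longrightarrow> R g *\<^sub>v v \<in> carrier_vec n"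
  by (rule mult_mat_vec_carrier[OF rep_carrier])

lemma adjoint_rep_carrier [simp]: "g \<in> carrier G \<Longrightarrow> mat_adjoint (R g) \<in> carrier_mat n n"
  by simp

lemma rep_mult: "g \<in> carrier G \<Longrightarrow> h \<in> carrier G \<Longrightarrow> R (g \<otimes> h) = R g * R h"
  using rep unfolding is_rep_def by blast

lemma rep_one [simp]: "R \<one> = 1\<^sub>m n"
  using rep unfolding is_rep_def by blast

lemma rep_inv_mult: "g \<in> carrier G \<Longrightarrow> R (inv g) * R g = 1\<^sub>m n"
  by (metis inv_closed l_inv rep_mult rep_one)

lemma rep_inv_mult_cancel: "g \<in> carrier G \<Longrightarrow> A \<in> carrier_mat n n \<Longrightarrow> R (inv g) * (R g * A) = A"
  using assoc_mult_mat[of "R (inv g)" n n "R g" n A n] by (simp add: rep_inv_mult)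

lemmas mat_assoc_simps = assoc_mult_mat[of _ n n _ n _ n] mult_carrier_mat[of _ n n _ n]
  right_mult_one_mat[of _ n n] left_mult_one_mat[of _ n n]

lemma rep_kernel_subset_char_center: "rep_kernel G n R \<subseteq> char_center G (character_of G R)"
  unfolding rep_kernel_def char_center_def by (auto simp: character_of_eq)

definition invariant_form :: "complex mat" where
  "invariant_form = mat_sum n (carrier G) (\<lambda>h. mat_adjoint (R h) * R h)"

lemma invariant_form_carrier [simp]: "invariant_form \<in> carrier_mat n n"
  unfolding invariant_form_def by simp

lemma dim_invariant_form [simp]: "dim_row invariant_form = n" "dim_col invariant_form = n"
  using invariant_form_carrier by blast+

lemma invariant_form_mult_vec_carrier [simp]:
  "v \<in> carrier_vec n \<Longrightarrow> invariant_form *\<^sub>v v \<in> carrier_vec n"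
  by (rule mult_mat_vec_carrier[OF invariant_form_carrier])

lemma invariant_form_invariant:
  assumes g: "g \<in> carrier G"
  shows "mat_adjoint (R g) * invariant_form * R g = invariant_form"
proof -
  have summand: "mat_adjoint (R h) * R h \<in> carrier_mat n n" if "h \<in> carrier G" for h
    using that by (intro mult_carrier_mat[of _ n n]) simp_all
  have "mat_adjoint (R g) * invariant_form * R g
      = mat_sum n (carrier G) (\<lambda>h. mat_adjoint (R g) * (mat_adjoint (R h) * R h)) * R g"
    unfolding invariant_form_def by (simp only: mat_sum_mult_left[OF summand adjoint_rep_carrier[OF g]])
  also have "\<dots> = mat_sum n (carrier G) (\<lambda>h. mat_adjoint (R g) * (mat_adjoint (R h) * R h) * R g)"
    using g summand by (intro mat_sum_mult_right mult_carrier_mat[of _ n n]) simp_all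
  also have "\<dots> = mat_sum n (carrier G) (\<lambda>h. mat_adjoint (R (h \<otimes> g)) * R (h \<otimes> g))"
  proof (rule mat_sum_cong)
    fix h assume h: "h \<in> carrier G"
    have "mat_adjoint (R (h \<otimes> g)) * R (h \<otimes> g) = mat_adjoint (R g) * mat_adjoint (R h) * (R h * R g)"
      using g h by (simp add: rep_mult mat_adjoint_mult[of _ n n _ n])
    also have "\<dots> = mat_adjoint (R g) * (mat_adjoint (R h) * R h) * R g"
      using g h by (simp add: mat_assoc_simps)
    finally show "mat_adjoint (R g) * (mat_adjoint (R h) * R h) * R g
        = mat_adjoint (R (h \<otimes> g)) * R (h \<otimes> g)" ..
  qed
  also have "\<dots> = invariant_form"
    unfolding invariant_form_def
    using mat_sum_reindex_bij_betw[OF bij_betw_mult_right[OF g]] .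
  finally show ?thesis .
qed

lemma invariant_form_definite:
  assumes y: "y \<in> carrier_vec n" and zero: "conjugate y \<bullet> (invariant_form *\<^sub>v y) = 0"
  shows "y = 0\<^sub>v n"
proof -
  have "conjugate y \<bullet> (invariant_form *\<^sub>v y) = (\<Sum>h\<in>carrier G. conjugate (R h *\<^sub>v y) \<bullet> (R h *\<^sub>v y))"
  proof -
    have "conjugate y \<bullet> (invariant_form *\<^sub>v y)
        = (\<Sum>h\<in>carrier G. conjugate y \<bullet> ((mat_adjoint (R h) * R h) *\<^sub>v y))"
      unfolding invariant_form_def using y
      by (intro scalar_prod_mat_sum_mult_vec) (simp_all add: mat_assoc_simps)
    also have "\<dots> = (\<Sum>h\<in>carrier G. conjugate (R h *\<^sub>v y) \<bullet> (R h *\<^sub>v y))"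
      using y by (intro sum.cong refl)
        (simp add: assoc_mult_mat_vec[of _ n n _ n] scalar_prod_mat_adjoint[of _ n n])
    finally show ?thesis .
  qed
  moreover have "conjugate (R h *\<^sub>v y) \<bullet> (R h *\<^sub>v y) \<ge> 0" if "h \<in> carrier G" for h
    using that y by (intro conjugate_scalar_prod_self_nonneg[of _ n]) simp
  ultimately have "\<forall>h \<in> carrier G. conjugate (R h *\<^sub>v y) \<bullet> (R h *\<^sub>v y) = 0"
    using zero sum_nonneg_eq_0_iff[OF finite_carrier,
        of "\<lambda>h. conjugate (R h *\<^sub>v y) \<bullet> (R h *\<^sub>v y)"] by simp
  then have "conjugate (R \<one> *\<^sub>v y) \<bullet> (R \<one> *\<^sub>v y) = 0" by blast
  then show ?thesis using y by (simp add: conjugate_scalar_prod_self_eq_0)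
qed

lemma invariant_form_kernel: "y \<in> carrier_vec n \<Longrightarrow> invariant_form *\<^sub>v y = 0\<^sub>v n \<Longrightarrow> y = 0\<^sub>v n"
  using invariant_form_definite[of y] by simp

lemma invariant_form_mult_rep:
  assumes g: "g \<in> carrier G"
  shows "invariant_form * R g = mat_adjoint (R (inv g)) * invariant_form"
proof -
  have "invariant_form * R g = mat_adjoint (R (inv g)) * invariant_form * R (inv g) * R g"
    using invariant_form_invariant[of "inv g"] g by simp
  also have "\<dots> = mat_adjoint (R (inv g)) * invariant_form * (R (inv g) * R g)"
    using g by (simp add: mat_assoc_simps)
  finally show ?thesis using g by (simp add: rep_inv_mult mat_assoc_simps)
qed

text \<open>Conjugating by the invertible matrix \<open>invariant_form\<close> turns \<open>R g\<close> into the adjoint of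
  \<open>R (inv g)\<close>, so their traces agree.\<close>

lemma character_inv:
  assumes g: "g \<in> carrier G"
  shows "mat_trace (R (inv g)) = cnj (mat_trace (R g))"
proof -
  obtain Q where Q: "Q \<in> carrier_mat n n" "invariant_form * Q = 1\<^sub>m n" "Q * invariant_form = 1\<^sub>m n"
    using invertible_of_trivial_kernel[OF invariant_form_carrier invariant_form_kernel] by blast
  have "mat_adjoint (R (inv g)) = mat_adjoint (R (inv g)) * invariant_form * Q"
    using g Q by (simp add: mat_assoc_simps)
  also have "\<dots> = invariant_form * R g * Q"
    using g by (simp only: invariant_form_mult_rep)
  also have "\<dots> = invariant_form * (R g * Q)"
    using g Q by (simp add: mat_assoc_simps)
  finally have "mat_trace (mat_adjoint (R (inv g))) = mat_trace (invariant_form * (R g * Q))"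
    by simp
  also have "\<dots> = mat_trace (R g * Q * invariant_form)"
    using g Q by (intro mat_trace_mult_comm[of _ n n]) (simp_all add: mat_assoc_simps)
  also have "\<dots> = mat_trace (R g)"
    using g Q by (simp add: mat_assoc_simps)
  finally have "cnj (mat_trace (R (inv g))) = mat_trace (R g)"
    using g by (simp add: mat_trace_adjoint[of _ n])
  then show ?thesis by (metis complex_cnj_cnj)
qed

definition averaged :: "complex mat \<Rightarrow> complex mat" where
  "averaged X = mat_sum n (carrier G) (\<lambda>g. R g * X * R (inv g))"

lemma averaged_carrier [simp]: "averaged X \<in> carrier_mat n n"
  unfolding averaged_def by simp

lemma averaged_commutes:
  assumes h: "h \<in> carrier G" and X: "X \<in> carrier_mat n n"
  shows "averaged X * R h = R h * averaged X"
proof -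
  have summand: "R g * X * R (inv g) \<in> carrier_mat n n" if "g \<in> carrier G" for g
    using that X by (simp add: mat_assoc_simps)
  have "averaged X * R h = mat_sum n (carrier G) (\<lambda>g. R g * X * R (inv g) * R h)"
    unfolding averaged_def using h summand by (simp add: mat_sum_mult_right)
  also have "\<dots> = mat_sum n (carrier G) (\<lambda>g. R (h \<otimes> g) * X * R (inv (h \<otimes> g)) * R h)"
    by (rule mat_sum_reindex_bij_betw[OF bij_betw_mult_left[OF h], symmetric])
  also have "\<dots> = mat_sum n (carrier G) (\<lambda>g. R h * (R g * X * R (inv g)))"
  proof (rule mat_sum_cong)
    fix g assume g: "g \<in> carrier G"
    have "R (h \<otimes> g) * X * R (inv (h \<otimes> g)) * R h = R h * (R g * (X * (R (inv g) * (R (inv h) * R h))))"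
      using g h X by (simp add: rep_mult inv_mult_group mat_assoc_simps)
    also have "\<dots> = R h * (R g * X * R (inv g))"
      using g h X by (simp add: rep_inv_mult mat_assoc_simps)
    finally show "R (h \<otimes> g) * X * R (inv (h \<otimes> g)) * R h = R h * (R g * X * R (inv g))" .
  qed
  also have "\<dots> = R h * averaged X"
    unfolding averaged_def using h summand by (simp add: mat_sum_mult_left)
  finally show ?thesis .
qed

lemma mat_trace_averaged:
  assumes X: "X \<in> carrier_mat n n"
  shows "mat_trace (averaged X) = of_nat (card (carrier G)) * mat_trace X"
proof -
  have "mat_trace (averaged X) = (\<Sum>g\<in>carrier G. mat_trace (R g * X * R (inv g)))"
    unfolding averaged_def using X by (intro mat_trace_mat_sum) (simp add: mat_assoc_simps)
  also have "\<dots> = (\<Sum>g\<in>carrier G. mat_trace X)"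
  proof (rule sum.cong[OF refl])
    fix g assume g: "g \<in> carrier G"
    then have "mat_trace (R g * X * R (inv g)) = mat_trace (R (inv g) * (R g * X))"
      using X by (intro mat_trace_mult_comm[of _ n n]) (simp_all add: mat_assoc_simps)
    also have "\<dots> = mat_trace X" using g X by (simp add: rep_inv_mult_cancel)
    finally show "mat_trace (R g * X * R (inv g)) = mat_trace X" .
  qed
  finally show ?thesis by simp
qed

end

lemma finite_group_repI:
  "group G \<Longrightarrow> finite (carrier G) \<Longrightarrow> is_rep G n R \<Longrightarrow> finite_group_rep G n R"
  by (simp add: finite_group_rep_def finite_group_rep_axioms_def)

section \<open>Irreducible representations\<close>

lemma eigenspace_is_subspace:
  assumes A: "(A :: complex mat) \<in> carrier_mat n n"
  shows "is_subspace n {w \<in> carrier_vec n. A *\<^sub>v w = c \<cdot>\<^sub>v w}"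
  unfolding is_subspace_def using A
  by (auto simp: mult_add_distrib_mat_vec smult_add_distrib_vec[of _ n] mult_mat_vec
      smult_smult_assoc mult.commute)

lemma schur_lemma:
  assumes irr: "is_irr_rep G n R" and A: "A \<in> carrier_mat n n"
    and comm: "\<And>g. g \<in> carrier G \<Longrightarrow> A * R g = R g * A"
  obtains c where "A = c \<cdot>\<^sub>m 1\<^sub>m n"
proof -
  have rep: "is_rep G n R" using irr by (rule is_irr_rep_is_rep)
  then have "0 < n" unfolding is_rep_def by blast
  then obtain c v where v: "v \<in> carrier_vec n" "v \<noteq> 0\<^sub>v n" "A *\<^sub>v v = c \<cdot>\<^sub>v v"
    using spectrum_non_empty[OF A] A unfolding spectrum_def eigenvalue_def eigenvector_def by blast
  define W where "W = {w \<in> carrier_vec n. A *\<^sub>v w = c \<cdot>\<^sub>v w}"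
  have invariant: "R g *\<^sub>v w \<in> W" if g: "g \<in> carrier G" and w: "w \<in> W" for g w
  proof -
    have Rg: "R g \<in> carrier_mat n n" using rep g unfolding is_rep_def by blast
    have wc: "w \<in> carrier_vec n" and Aw: "A *\<^sub>v w = c \<cdot>\<^sub>v w" using w unfolding W_def by auto
    have "A *\<^sub>v (R g *\<^sub>v w) = (R g * A) *\<^sub>v w"
      using comm[OF g] assoc_mult_mat_vec[OF A Rg wc] by simp
    also have "\<dots> = c \<cdot>\<^sub>v (R g *\<^sub>v w)"
      using assoc_mult_mat_vec[OF Rg A wc] Aw mult_mat_vec[OF Rg wc] by simp
    finally show ?thesis unfolding W_def using Rg wc by simp
  qed
  have "W \<noteq> {0\<^sub>v n}" using v unfolding W_def by auto
  then have "W = carrier_vec n"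
    using irr eigenspace_is_subspace[OF A] invariant unfolding is_irr_rep_def W_def by blast
  then have "A = c \<cdot>\<^sub>m 1\<^sub>m n"
    using A by (intro eq_mat_by_mult_vec[OF A]) (auto simp: W_def smult_one_mat_mult_vec)
  then show ?thesis by (rule that)
qed

locale finite_group_irr_rep = finite_group_rep +
  assumes irr: "is_irr_rep G n R"

lemma finite_group_irr_repI:
  "group G \<Longrightarrow> finite (carrier G) \<Longrightarrow> is_irr_rep G n R \<Longrightarrow> finite_group_irr_rep G n R"
  by (simp add: finite_group_irr_rep_def finite_group_irr_rep_axioms_def finite_group_repI
      is_irr_rep_is_rep)

context finite_group_irr_rep
begin

text \<open>Schur's lemma applied to the average of a matrix unit gives the orthogonality of the
  matrix coefficients.\<close>

lemma sum_diag_mult_diag_inv: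
  assumes i: "i < n" and k: "k < n"
  shows "(\<Sum>g\<in>carrier G. R g $$ (i, i) * R (inv g) $$ (k, k)) =
    (if i = k then of_nat (card (carrier G)) / of_nat n else 0)"
proof -
  have "averaged (mat_unit n i k) * R g = R g * averaged (mat_unit n i k)" if "g \<in> carrier G" for g
    using that by (simp add: averaged_commutes)
  then obtain c where c: "averaged (mat_unit n i k) = c \<cdot>\<^sub>m 1\<^sub>m n"
    using schur_lemma[OF irr averaged_carrier] by blast
  have "c * of_nat n = of_nat (card (carrier G)) * (if i = k then 1 else 0)"
    using mat_trace_averaged[of "mat_unit n i k"] c i by (simp add: mat_trace_mat_unit)
  then have c_eq: "c = (if i = k then of_nat (card (carrier G)) / of_nat n else 0)"
    using degree_pos by (cases "i = k") (simp_all add: eq_divide_eq)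
  have "(\<Sum>g\<in>carrier G. R g $$ (i, i) * R (inv g) $$ (k, k))
      = (\<Sum>g\<in>carrier G. (R g * mat_unit n i k * R (inv g)) $$ (i, k))"
    using i k by (intro sum.cong refl index_mult_mat_unit_mult[symmetric]) simp_all
  also have "\<dots> = averaged (mat_unit n i k) $$ (i, k)"
    unfolding averaged_def using i k by simp
  finally show ?thesis using c c_eq i k by simp
qed

lemma sum_character_mult_character_inv:
  "(\<Sum>g\<in>carrier G. mat_trace (R g) * mat_trace (R (inv g))) = of_nat (card (carrier G))"
proof -
  have "(\<Sum>g\<in>carrier G. mat_trace (R g) * mat_trace (R (inv g)))
      = (\<Sum>i<n. \<Sum>k<n. \<Sum>g\<in>carrier G. R g $$ (i, i) * R (inv g) $$ (k, k))"
    by (simp add: mat_trace_def sum_product sum.swap[of _ "carrier G"])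
  also have "\<dots> = (\<Sum>i<n. of_nat (card (carrier G)) / of_nat n)"
    by (simp add: sum_diag_mult_diag_inv sum.delta)
  finally show ?thesis using degree_pos by simp
qed

lemma sum_norm_character_square:
  "(\<Sum>g\<in>carrier G. (cmod (mat_trace (R g)))\<^sup>2) = real (card (carrier G))"
proof -
  have "complex_of_real (\<Sum>g\<in>carrier G. (cmod (mat_trace (R g)))\<^sup>2)
      = (\<Sum>g\<in>carrier G. complex_of_real ((cmod (mat_trace (R g)))\<^sup>2))"
    by (rule of_real_sum)
  also have "\<dots> = (\<Sum>g\<in>carrier G. mat_trace (R g) * cnj (mat_trace (R g)))"
    by (simp only: complex_norm_square)
  also have "\<dots> = (\<Sum>g\<in>carrier G. mat_trace (R g) * mat_trace (R (inv g)))"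
    by (simp add: character_inv)
  finally show ?thesis
    using sum_character_mult_character_inv by (metis of_real_eq_iff of_real_of_nat_eq)
qed

text \<open>A central element acts as a scalar, of modulus one because its inverse acts by the
  complex conjugate scalar.\<close>

lemma in_char_center_if_commuting:
  assumes z: "z \<in> carrier G" and comm: "\<And>g. g \<in> carrier G \<Longrightarrow> R z * R g = R g * R z"
  shows "z \<in> char_center G (character_of G R)"
proof -
  obtain c where c: "R z = c \<cdot>\<^sub>m 1\<^sub>m n"
    using schur_lemma[OF irr rep_carrier[OF z] comm] by blast
  have "1\<^sub>m n = c \<cdot>\<^sub>m R (inv z)"
    using rep_inv_mult[OF z] z by (simp add: c mult_smult_distrib[of _ n n _ n])
  then have "of_nat n = mat_trace (c \<cdot>\<^sub>m R (inv z))"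
    by (metis mat_trace_one)
  also have "\<dots> = c * cnj (mat_trace (R z))"
    using z by (simp add: mat_trace_smult[of _ n] character_inv)
  finally have "of_nat n = c * cnj (mat_trace (R z))" .
  then have "c * cnj c = 1"
    using degree_pos by (simp add: c mat_trace_smult[of _ n])
  then have "cmod c = 1"
    by (metis complex_norm_square norm_ge_zero of_real_eq_1_iff power2_eq_1_iff
        abs_of_nonneg real_sqrt_abs real_sqrt_one)
  then show ?thesis
    unfolding char_center_def using z by (simp add: character_of_eq c mat_trace_smult[of _ n] norm_mult)
qed

lemma card_char_center_GVZ:
  assumes "GVZ G"
  shows "card (char_center G (character_of G R)) * n\<^sup>2 = card (carrier G)"
proof -
  let ?Z = "char_center G (character_of G R)"
  have Z: "?Z \<subseteq> carrier G" unfolding char_center_def by blast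
  have vanish: "mat_trace (R g) = 0" if "g \<in> carrier G - ?Z" for g
    using assms character_of_in_Irr[OF irr] that unfolding GVZ_def by (auto simp: character_of_eq)
  have on_center: "cmod (mat_trace (R g)) = real n" if "g \<in> ?Z" for g
    using that unfolding char_center_def by (auto simp: character_of_eq)
  have "real (card (carrier G))
      = (\<Sum>g\<in>carrier G - ?Z. (cmod (mat_trace (R g)))\<^sup>2) + (\<Sum>g\<in>?Z. (cmod (mat_trace (R g)))\<^sup>2)"
    using sum_norm_character_square sum.subset_diff[OF Z finite_carrier,
        of "\<lambda>g. (cmod (mat_trace (R g)))\<^sup>2"] by simp
  also have "\<dots> = real (card ?Z) * (real n)\<^sup>2"
    by (simp add: vanish on_center)
  finally show ?thesis by (metis of_nat_eq_iff of_nat_mult of_nat_power)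
qed

end

section \<open>Complete reducibility\<close>

lemma (in vec_space) maximal_lin_indpt_subset:
  assumes U: "U \<subseteq> carrier_vec n"
  obtains T where "finite T" "T \<subseteq> U" "lin_indpt T" "card T \<le> n" "U \<subseteq> span T"
proof -
  let ?P = "\<lambda>T. T \<subseteq> U \<and> lin_indpt T"
  have bound: "finite A \<and> card A \<le> n" if "?P A" for A
    using that U li_le_dim[OF fin_dim, of A] dim_is_n by auto
  have "?P {}" unfolding lin_dep_def by auto
  then obtain T where T: "finite T" "maximal T ?P" using maximal_exists[of ?P n "{}"] bound by blast
  then have TU: "T \<subseteq> U" "lin_indpt T" unfolding maximal_def by auto
  have Tc: "T \<subseteq> carrier_vec n" using TU U by blast
  have "u \<in> span T" if u: "u \<in> U" for u
  proof (cases "u \<in> T")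
    case True
    then show ?thesis using in_own_span[OF Tc] by blast
  next
    case False
    then have "\<not> ?P (T \<union> {u})" using T(2) unfolding maximal_def by blast
    then have "lin_dep (T \<union> {u})" using TU u by blast
    then show ?thesis using lin_dep_iff_in_span[OF Tc TU(2) _ False] u U by auto
  qed
  then show ?thesis using that T(1) TU bound by blast
qed

lemma mat_of_cols_mult_vec_in_subspace:
  assumes U: "is_subspace n U" and ws: "set ws \<subseteq> U" and x: "x \<in> carrier_vec (length ws)"
  shows "mat_of_cols n ws *\<^sub>v x \<in> U"
proof -
  interpret vec_space "TYPE(complex)" n .
  have wsc: "set ws \<subseteq> carrier_vec n" using ws U unfolding is_subspace_def by blast
  have in_U: "lincomb_list c ws \<in> U" for c
    using ws by (induction ws arbitrary: c) (use U in \<open>auto simp: is_subspace_def\<close>)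
  have "vec (length ws) (\<lambda>i. x $ i) = x" using x by auto
  moreover have "\<forall>w \<in> set ws. dim_vec w = n" using wsc by auto
  ultimately have "lincomb_list (\<lambda>i. x $ i) ws = mat_of_cols n ws *\<^sub>v x"
    using lincomb_list_as_mat_mult[of ws "\<lambda>i. x $ i"] by simp
  then show ?thesis using in_U by metis
qed

lemma subspace_coordinates:
  assumes U: "is_subspace n U"
  obtains m B where "B \<in> carrier_mat n m" "m \<le> n"
    "\<And>x. x \<in> carrier_vec m \<Longrightarrow> B *\<^sub>v x = 0\<^sub>v n \<Longrightarrow> x = 0\<^sub>v m"
    "\<And>u. u \<in> U \<Longrightarrow> \<exists>x \<in> carrier_vec m. u = B *\<^sub>v x"
    "\<And>x. x \<in> carrier_vec m \<Longrightarrow> B *\<^sub>v x \<in> U"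
proof -
  interpret vec_space "TYPE(complex)" n .
  have Uc: "U \<subseteq> carrier_vec n" using U unfolding is_subspace_def by blast
  obtain T where T: "finite T" "T \<subseteq> U" "lin_indpt T" "card T \<le> n" "U \<subseteq> span T"
    using maximal_lin_indpt_subset[OF Uc] by blast
  obtain ws where ws: "set ws = T" "distinct ws" using finite_distinct_list[OF T(1)] by blast
  have wsc: "set ws \<subseteq> carrier_vec n" using T(2) Uc ws by blast
  then have dims: "\<forall>w \<in> set ws. dim_vec w = n" by auto
  let ?B = "mat_of_cols n ws"
  have B: "?B \<in> carrier_mat n (length ws)" by simp
  have "x = 0\<^sub>v (length ws)" if "x \<in> carrier_vec (length ws)" "?B *\<^sub>v x = 0\<^sub>v n" for x
    using lin_depI[OF B that(1) _ that(2)] cols_mat_of_cols[OF wsc] ws T(3) by auto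
  moreover have "\<exists>x \<in> carrier_vec (length ws). u = ?B *\<^sub>v x" if "u \<in> U" for u
  proof -
    have "u \<in> span_list ws" using that T(5) span_list_as_span[OF wsc] ws(1) by auto
    then obtain c where "u = lincomb_list c ws" unfolding span_list_def by blast
    then have "u = ?B *\<^sub>v vec (length ws) c"
      using lincomb_list_as_mat_mult[OF dims] by simp
    then show ?thesis by auto
  qed
  moreover have "length ws \<le> n" using T(4) ws distinct_card by metis
  ultimately show ?thesis
    using that[OF B] mat_of_cols_mult_vec_in_subspace[OF U] T(2) ws(1) by blast
qed

lemma mult_mat_cancel_left:
  assumes B: "(B :: complex mat) \<in> carrier_mat n m"
    and inj: "\<And>x. x \<in> carrier_vec m \<Longrightarrow> B *\<^sub>v x = 0\<^sub>v n \<Longrightarrow> x = 0\<^sub>v m"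
    and X: "X \<in> carrier_mat m p" and Y: "Y \<in> carrier_mat m p" and eq: "B * X = B * Y"
  shows "X = Y"
proof (rule mat_col_eqI)
  fix j assume "j < dim_col Y"
  then have j: "j < p" using Y by simp
  have "B *\<^sub>v col X j = B *\<^sub>v col Y j" using B X Y j eq by (metis col_mult2)
  then have "B *\<^sub>v (col X j - col Y j) = 0\<^sub>v n"
    using B X Y j by (simp add: mult_minus_distrib_mat_vec)
  then have diff: "col X j - col Y j = 0\<^sub>v m" using inj X Y j by simp
  show "col X j = col Y j"
  proof (rule eq_vecI)
    fix i assume "i < dim_vec (col Y j)"
    then show "col X j $ i = col Y j $ i"
      using arg_cong[OF diff, of "\<lambda>v. v $ i"] X Y by simp
  qed (use X Y in simp)
qed (use X Y in simp_all)

context finite_group_rep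
begin

lemma rep_on_invariant_column_space:
  assumes B: "B \<in> carrier_mat n m" and m: "0 < m"
    and inj: "\<And>x. x \<in> carrier_vec m \<Longrightarrow> B *\<^sub>v x = 0\<^sub>v n \<Longrightarrow> x = 0\<^sub>v m"
    and invariant: "\<And>g j. g \<in> carrier G \<Longrightarrow> j < m \<Longrightarrow>
      \<exists>y \<in> carrier_vec m. R g *\<^sub>v col B j = B *\<^sub>v y"
  obtains S where "is_rep G m S" "\<And>g. g \<in> carrier G \<Longrightarrow> R g * B = B * S g"
proof -
  have "\<exists>M \<in> carrier_mat m m. R g * B = B * M" if g: "g \<in> carrier G" for g
  proof -
    obtain f where f: "\<And>j. j < m \<Longrightarrow> f j \<in> carrier_vec m \<and> R g *\<^sub>v col B j = B *\<^sub>v f j"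
      using invariant[OF g] by metis
    define M where "M = mat_of_cols m (map f [0..<m])"
    have M: "M \<in> carrier_mat m m" unfolding M_def using mat_of_cols_carrier(1)[of m "map f [0..<m]"] by simp
    have "R g * B = B * M"
      by (rule mat_col_eqI)
        (use f g B M in \<open>simp_all add: col_mult2[OF rep_carrier[OF g] B] col_mult2[OF B M] M_def\<close>)
    then show ?thesis using M by blast
  qed
  then obtain S where S: "\<And>g. g \<in> carrier G \<Longrightarrow> S g \<in> carrier_mat m m \<and> R g * B = B * S g"
    by metis
  have cancel: "X = Y" if "X \<in> carrier_mat m m" "Y \<in> carrier_mat m m" "B * X = B * Y" for X Y
    using mult_mat_cancel_left[OF B inj that] .
  have "S (g \<otimes> h) = S g * S h" if g: "g \<in> carrier G" and h: "h \<in> carrier G" for g h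
  proof (rule cancel)
    have Sg: "S g \<in> carrier_mat m m" "R g * B = B * S g" and Sh: "S h \<in> carrier_mat m m" "R h * B = B * S h"
      using S g h by auto
    have "B * S (g \<otimes> h) = R g * (R h * B)"
      using S[of "g \<otimes> h"] g h B by (simp add: rep_mult assoc_mult_mat[of _ n n _ n _ m])
    also have "\<dots> = (R g * B) * S h"
      using g B Sh by (simp add: assoc_mult_mat[of _ n n _ m _ m])
    also have "\<dots> = B * (S g * S h)"
      using B Sg Sh by (simp add: assoc_mult_mat[of _ n m _ m _ m])
    finally show "B * S (g \<otimes> h) = B * (S g * S h)" .
  qed (use S g h in \<open>auto intro: mult_carrier_mat\<close>)
  moreover have "S \<one> = 1\<^sub>m m"
    by (rule cancel) (use S[of \<one>] B in auto)
  ultimately have "is_rep G m S" unfolding is_rep_def using S m by auto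
  then show ?thesis using that S by blast
qed

lemma subrepresentation:
  assumes U: "is_subspace n U" and invariant: "\<And>g u. g \<in> carrier G \<Longrightarrow> u \<in> U \<Longrightarrow> R g *\<^sub>v u \<in> U"
    and nonzero: "U \<noteq> {0\<^sub>v n}" and proper: "U \<noteq> carrier_vec n"
  obtains m S where "m < n" "is_rep G m S" "rep_kernel G n R \<subseteq> rep_kernel G m S"
    "\<And>g h u. abelian_image G S \<Longrightarrow> g \<in> carrier G \<Longrightarrow> h \<in> carrier G \<Longrightarrow> u \<in> U \<Longrightarrow>
      R g *\<^sub>v (R h *\<^sub>v u) = R h *\<^sub>v (R g *\<^sub>v u)"
proof -
  obtain m B where B: "B \<in> carrier_mat n m" "m \<le> n"
    and inj: "\<And>x. x \<in> carrier_vec m \<Longrightarrow> B *\<^sub>v x = 0\<^sub>v n \<Longrightarrow> x = 0\<^sub>v m"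
    and span: "\<And>u. u \<in> U \<Longrightarrow> \<exists>x \<in> carrier_vec m. u = B *\<^sub>v x"
    and range: "\<And>x. x \<in> carrier_vec m \<Longrightarrow> B *\<^sub>v x \<in> U"
    using subspace_coordinates[OF U] by metis
  have "0\<^sub>v n \<in> U" using U unfolding is_subspace_def by blast
  have "0 < m"
  proof (rule ccontr)
    assume "\<not> 0 < m"
    then have "B *\<^sub>v x = 0\<^sub>v n" if "x \<in> carrier_vec m" for x
      using B that by (intro eq_vecI) (auto simp: scalar_prod_def)
    then have "U \<subseteq> {0\<^sub>v n}" using span by fastforce
    then show False using nonzero \<open>0\<^sub>v n \<in> U\<close> by blast
  qed
  have "m \<noteq> n"
  proof
    assume "m = n"
    then obtain B' where B': "B' \<in> carrier_mat n n" "B * B' = 1\<^sub>m n"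
      using invertible_of_trivial_kernel[of B n] B inj by metis
    have "v \<in> U" if v: "v \<in> carrier_vec n" for v
      using range[of "B' *\<^sub>v v"] B B' v \<open>m = n\<close> by (simp add: assoc_mult_mat_vec[symmetric, of _ n n _ n])
    then show False using proper U unfolding is_subspace_def by blast
  qed
  have "\<exists>y \<in> carrier_vec m. R g *\<^sub>v col B j = B *\<^sub>v y" if g: "g \<in> carrier G" and j: "j < m" for g j
  proof -
    have "col B j = B *\<^sub>v unit_vec m j" using B j by (intro eq_vecI) simp_all
    then have "col B j \<in> U" using range by simp
    then show ?thesis using span invariant g by blast
  qed
  then obtain S where S: "is_rep G m S" and RB: "\<And>g. g \<in> carrier G \<Longrightarrow> R g * B = B * S g"
    using rep_on_invariant_column_space[OF B(1) \<open>0 < m\<close> inj] by metis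
  have S_carrier: "S g \<in> carrier_mat m m" if "g \<in> carrier G" for g
    using S that unfolding is_rep_def by blast
  have "rep_kernel G n R \<subseteq> rep_kernel G m S"
  proof
    fix g assume "g \<in> rep_kernel G n R"
    then have g: "g \<in> carrier G" and "R g = 1\<^sub>m n" unfolding rep_kernel_def by auto
    then have "B * S g = B * 1\<^sub>m m" using RB[OF g] B by simp
    then have "S g = 1\<^sub>m m" using mult_mat_cancel_left[OF B(1) inj S_carrier[OF g]] by simp
    then show "g \<in> rep_kernel G m S" using g unfolding rep_kernel_def by simp
  qed
  moreover have "R g *\<^sub>v (R h *\<^sub>v u) = R h *\<^sub>v (R g *\<^sub>v u)"
    if "abelian_image G S" and g: "g \<in> carrier G" and h: "h \<in> carrier G" and u: "u \<in> U" for g h u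
  proof -
    obtain x where x: "x \<in> carrier_vec m" "u = B *\<^sub>v x" using span[OF u] by blast
    have image: "R a *\<^sub>v (R b *\<^sub>v u) = B *\<^sub>v (S a *\<^sub>v (S b *\<^sub>v x))"
      if a: "a \<in> carrier G" and b: "b \<in> carrier G" for a b
    proof -
      have move: "R c *\<^sub>v (B *\<^sub>v y) = B *\<^sub>v (S c *\<^sub>v y)" if "c \<in> carrier G" "y \<in> carrier_vec m" for c y
        using that by (simp add: assoc_mult_mat_vec[OF rep_carrier B(1), symmetric] RB
            assoc_mult_mat_vec[OF B(1) S_carrier])
      show ?thesis using move[OF b x(1)] move[OF a] S_carrier[OF b] x by simp
    qed
    have "S g * S h = S h * S g" using \<open>abelian_image G S\<close> g h unfolding abelian_image_def by blast
    then have "S g *\<^sub>v (S h *\<^sub>v x) = S h *\<^sub>v (S g *\<^sub>v x)"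
      using S_carrier[OF g] S_carrier[OF h] x by (simp flip: assoc_mult_mat_vec)
    then show ?thesis using image[OF g h] image[OF h g] by simp
  qed
  ultimately show ?thesis using that[of m S] S B(2) \<open>m \<noteq> n\<close> by auto
qed

definition form_complement :: "complex vec set \<Rightarrow> complex vec set" where
  "form_complement U = {v \<in> carrier_vec n. \<forall>u \<in> U. conjugate u \<bullet> (invariant_form *\<^sub>v v) = 0}"

lemma form_complement_subspace:
  assumes U: "U \<subseteq> carrier_vec n"
  shows "is_subspace n (form_complement U)"
proof -
  have "conjugate u \<bullet> (invariant_form *\<^sub>v (v + w))
      = conjugate u \<bullet> (invariant_form *\<^sub>v v) + conjugate u \<bullet> (invariant_form *\<^sub>v w)"
    if "u \<in> carrier_vec n" "v \<in> carrier_vec n" "w \<in> carrier_vec n" for u v w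
    using that by (simp add: mult_add_distrib_mat_vec[of _ n n] scalar_prod_add_distrib[of _ n]
        carrier_vec_conjugate)
  moreover have "conjugate u \<bullet> (invariant_form *\<^sub>v (c \<cdot>\<^sub>v v)) = c * (conjugate u \<bullet> (invariant_form *\<^sub>v v))"
    if "u \<in> carrier_vec n" "v \<in> carrier_vec n" for u v c
    using that by (simp add: mult_mat_vec[of _ n n])
  moreover have "invariant_form *\<^sub>v 0\<^sub>v n = 0\<^sub>v n"
    by (intro eq_vecI) (simp_all add: scalar_prod_def)
  ultimately show ?thesis
    using U unfolding is_subspace_def form_complement_def by (auto simp: subset_iff)
qed

lemma form_complement_invariant:
  assumes U: "U \<subseteq> carrier_vec n" and invariant: "\<And>g u. g \<in> carrier G \<Longrightarrow> u \<in> U \<Longrightarrow> R g *\<^sub>v u \<in> U"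
    and g: "g \<in> carrier G" and v: "v \<in> form_complement U"
  shows "R g *\<^sub>v v \<in> form_complement U"
proof -
  have vc: "v \<in> carrier_vec n" using v unfolding form_complement_def by blast
  have "conjugate u \<bullet> (invariant_form *\<^sub>v (R g *\<^sub>v v)) = 0" if u: "u \<in> U" for u
  proof -
    have "invariant_form *\<^sub>v (R g *\<^sub>v v) = mat_adjoint (R (inv g)) *\<^sub>v (invariant_form *\<^sub>v v)"
      using g vc by (simp add: assoc_mult_mat_vec[symmetric, of _ n n _ n] invariant_form_mult_rep)
    then have "conjugate u \<bullet> (invariant_form *\<^sub>v (R g *\<^sub>v v))
        = conjugate (R (inv g) *\<^sub>v u) \<bullet> (invariant_form *\<^sub>v v)"
      using g u U vc by (simp add: scalar_prod_mat_adjoint[of _ n n] subset_iff)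
    also have "\<dots> = 0" using v invariant[OF inv_closed[OF g] u] unfolding form_complement_def by blast
    finally show ?thesis .
  qed
  then show ?thesis using g vc unfolding form_complement_def by simp
qed

text \<open>The component in \<open>U = range B\<close> of a vector \<open>v\<close> is \<open>B y\<close>, where \<open>y\<close> solves the Gram system
  \<open>(B\<^sup>* P B) y = B\<^sup>* P v\<close> for the positive definite form \<open>P\<close>.\<close>

lemma form_complement_decomposition:
  assumes U: "is_subspace n U" and v: "v \<in> carrier_vec n"
  obtains u u' where "u \<in> U" "u' \<in> form_complement U" "v = u + u'"
proof -
  obtain m B where B: "B \<in> carrier_mat n m"
    and inj: "\<And>x. x \<in> carrier_vec m \<Longrightarrow> B *\<^sub>v x = 0\<^sub>v n \<Longrightarrow> x = 0\<^sub>v m"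
    and span: "\<And>u. u \<in> U \<Longrightarrow> \<exists>x \<in> carrier_vec m. u = B *\<^sub>v x"
    and range: "\<And>x. x \<in> carrier_vec m \<Longrightarrow> B *\<^sub>v x \<in> U"
    using subspace_coordinates[OF U] by metis
  let ?P = invariant_form and ?B' = "mat_adjoint B"
  have gram: "(?B' * ?P * B) *\<^sub>v x = ?B' *\<^sub>v (?P *\<^sub>v (B *\<^sub>v x))" if "x \<in> carrier_vec m" for x
  proof -
    have B': "?B' \<in> carrier_mat m n" using B by simp
    have "(?B' * ?P * B) *\<^sub>v x = (?B' * ?P) *\<^sub>v (B *\<^sub>v x)"
      using that B B' by (intro assoc_mult_mat_vec) auto
    also have "\<dots> = ?B' *\<^sub>v (?P *\<^sub>v (B *\<^sub>v x))"
      using that B B' by (intro assoc_mult_mat_vec) auto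
    finally show ?thesis .
  qed
  have "x = 0\<^sub>v m" if x: "x \<in> carrier_vec m" and "(?B' * ?P * B) *\<^sub>v x = 0\<^sub>v m" for x
  proof -
    have "conjugate (B *\<^sub>v x) \<bullet> (?P *\<^sub>v (B *\<^sub>v x)) = conjugate x \<bullet> ((?B' * ?P * B) *\<^sub>v x)"
      using x B by (simp add: gram scalar_prod_mat_adjoint[of ?B' m n])
    then have "B *\<^sub>v x = 0\<^sub>v n" using that B by (intro invariant_form_definite) simp_all
    then show ?thesis using inj x by blast
  qed
  then obtain Q where Q: "Q \<in> carrier_mat m m" "(?B' * ?P * B) * Q = 1\<^sub>m m"
    using invertible_of_trivial_kernel[of "?B' * ?P * B" m] B by (metis mult_carrier_mat
        mat_adjoint_carrier invariant_form_carrier)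
  define y where "y = Q *\<^sub>v (?B' *\<^sub>v (?P *\<^sub>v v))"
  have y: "y \<in> carrier_vec m" unfolding y_def using v
    by (intro mult_mat_vec_carrier[OF Q(1)] mult_mat_vec_carrier[OF mat_adjoint_carrier[OF B]]) simp
  have w: "?B' *\<^sub>v (?P *\<^sub>v v) \<in> carrier_vec m"
    using v by (intro mult_mat_vec_carrier[OF mat_adjoint_carrier[OF B]]) simp
  have "?B' *\<^sub>v (?P *\<^sub>v (B *\<^sub>v y)) = (?B' * ?P * B) *\<^sub>v (Q *\<^sub>v (?B' *\<^sub>v (?P *\<^sub>v v)))"
    unfolding y_def using gram[OF y] by (simp add: y_def)
  also have "\<dots> = ((?B' * ?P * B) * Q) *\<^sub>v (?B' *\<^sub>v (?P *\<^sub>v v))"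
    using B Q(1) w by (intro assoc_mult_mat_vec[symmetric]) auto
  also have "\<dots> = ?B' *\<^sub>v (?P *\<^sub>v v)" using Q(2) w by simp
  finally have "?B' *\<^sub>v (?P *\<^sub>v (B *\<^sub>v y)) = ?B' *\<^sub>v (?P *\<^sub>v v)" .
  then have orth: "?B' *\<^sub>v (?P *\<^sub>v (v - B *\<^sub>v y)) = 0\<^sub>v m"
    using B v y w by (simp add: mult_minus_distrib_mat_vec[of _ n n] mult_minus_distrib_mat_vec[of _ m n])
  have "v - B *\<^sub>v y \<in> form_complement U"
    unfolding form_complement_def
  proof (intro CollectI conjI ballI)
    show "v - B *\<^sub>v y \<in> carrier_vec n" using v y B by simp
    fix u assume "u \<in> U"
    then obtain z where z: "z \<in> carrier_vec m" "u = B *\<^sub>v z" using span by blast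
    have "conjugate u \<bullet> (?P *\<^sub>v (v - B *\<^sub>v y)) = conjugate z \<bullet> (?B' *\<^sub>v (?P *\<^sub>v (v - B *\<^sub>v y)))"
      using z B v y by (simp add: scalar_prod_mat_adjoint[of ?B' m n])
    then show "conjugate u \<bullet> (?P *\<^sub>v (v - B *\<^sub>v y)) = 0" using orth z by simp
  qed
  moreover have "v = B *\<^sub>v y + (v - B *\<^sub>v y)" using v y B by auto
  ultimately show ?thesis using that range[OF y] by blast
qed

lemma invariant_complement:
  assumes U: "is_subspace n U" and invariant: "\<And>g u. g \<in> carrier G \<Longrightarrow> u \<in> U \<Longrightarrow> R g *\<^sub>v u \<in> U"
    and nonzero: "U \<noteq> {0\<^sub>v n}" and proper: "U \<noteq> carrier_vec n"
  obtains U' where "is_subspace n U'" "\<And>g u. g \<in> carrier G \<Longrightarrow> u \<in> U' \<Longrightarrow> R g *\<^sub>v u \<in> U'"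
    "U' \<noteq> {0\<^sub>v n}" "U' \<noteq> carrier_vec n" "\<And>v. v \<in> carrier_vec n \<Longrightarrow> \<exists>u \<in> U. \<exists>u' \<in> U'. v = u + u'"
proof
  have Uc: "U \<subseteq> carrier_vec n" and "0\<^sub>v n \<in> U" using U unfolding is_subspace_def by auto
  show "is_subspace n (form_complement U)" by (rule form_complement_subspace[OF Uc])
  show "R g *\<^sub>v u \<in> form_complement U" if "g \<in> carrier G" "u \<in> form_complement U" for g u
    using form_complement_invariant[OF Uc invariant that] .
  show decomposition: "\<exists>u \<in> U. \<exists>u' \<in> form_complement U. v = u + u'" if "v \<in> carrier_vec n" for v
    using form_complement_decomposition[OF U that] by metis
  obtain u where u: "u \<in> U" "u \<noteq> 0\<^sub>v n" using nonzero \<open>0\<^sub>v n \<in> U\<close> by blast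
  then have "u \<notin> form_complement U"
    using invariant_form_definite[of u] Uc unfolding form_complement_def by blast
  then show "form_complement U \<noteq> carrier_vec n" using u Uc by blast
  obtain v where v: "v \<in> carrier_vec n" "v \<notin> U" using proper Uc by blast
  then show "form_complement U \<noteq> {0\<^sub>v n}"
    using decomposition[OF v(1)] Uc by force
qed

end

lemma mat_commute_of_commute_on_summands:
  fixes A B :: "complex mat"
  assumes A: "A \<in> carrier_mat n n" and B: "B \<in> carrier_mat n n"
    and W: "W \<subseteq> carrier_vec n" "\<And>w. w \<in> W \<Longrightarrow> A *\<^sub>v (B *\<^sub>v w) = B *\<^sub>v (A *\<^sub>v w)"
    and W': "W' \<subseteq> carrier_vec n" "\<And>w. w \<in> W' \<Longrightarrow> A *\<^sub>v (B *\<^sub>v w) = B *\<^sub>v (A *\<^sub>v w)"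
    and sum: "\<And>v. v \<in> carrier_vec n \<Longrightarrow> \<exists>w \<in> W. \<exists>w' \<in> W'. v = w + w'"
  shows "A * B = B * A"
proof (rule eq_mat_by_mult_vec[OF mult_carrier_mat[OF A B] mult_carrier_mat[OF B A]])
  fix v :: "complex vec" assume "v \<in> carrier_vec n"
  then obtain w w' where ww: "w \<in> W" "w' \<in> W'" "v = w + w'" using sum by blast
  have wc: "w \<in> carrier_vec n" "w' \<in> carrier_vec n" using ww W W' by blast+
  have split: "(X * Y) *\<^sub>v v = X *\<^sub>v (Y *\<^sub>v w) + X *\<^sub>v (Y *\<^sub>v w')"
    if "X \<in> carrier_mat n n" "Y \<in> carrier_mat n n" for X Y :: "complex mat"
    using that wc unfolding ww(3)
    by (simp add: mult_add_distrib_mat_vec[of _ n n] assoc_mult_mat_vec[of _ n n _ n])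
  show "(A * B) *\<^sub>v v = (B * A) *\<^sub>v v"
    using split[OF A B] split[OF B A] W(2)[OF ww(1)] W'(2)[OF ww(2)] by simp
qed

text \<open>Induction on the degree: split the representation along an invariant subspace and its
  complement; if both pieces had abelian image, so would the whole representation.\<close>

lemma exists_irr_rep_nonabelian_image:
  assumes G: "group G" "finite (carrier G)"
  shows "is_rep G k \<sigma> \<Longrightarrow> N \<subseteq> rep_kernel G k \<sigma> \<Longrightarrow> \<not> abelian_image G \<sigma> \<Longrightarrow>
    \<exists>d \<tau>. is_irr_rep G d \<tau> \<and> N \<subseteq> rep_kernel G d \<tau> \<and> \<not> abelian_image G \<tau>"
proof (induction k arbitrary: \<sigma> rule: less_induct)
  case (less k \<sigma>)
  interpret finite_group_rep G k \<sigma>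
    using finite_group_repI G less.prems(1) by blast
  show ?case
  proof (rule ccontr)
    assume none: "\<not> ?case"
    then have "\<exists>W. is_subspace k W \<and> W \<noteq> {0\<^sub>v k} \<and> W \<noteq> carrier_vec k
        \<and> (\<forall>g \<in> carrier G. \<forall>w \<in> W. \<sigma> g *\<^sub>v w \<in> W)"
      using less.prems unfolding is_irr_rep_def by blast
    then obtain W where W: "is_subspace k W" "W \<noteq> {0\<^sub>v k}" "W \<noteq> carrier_vec k"
      and W_inv': "\<forall>g \<in> carrier G. \<forall>w \<in> W. \<sigma> g *\<^sub>v w \<in> W"
      by blast
    then have W_inv: "\<And>g w. g \<in> carrier G \<Longrightarrow> w \<in> W \<Longrightarrow> \<sigma> g *\<^sub>v w \<in> W" by blast
    obtain W' where W': "is_subspace k W'"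
      and W'_inv: "\<And>g w. g \<in> carrier G \<Longrightarrow> w \<in> W' \<Longrightarrow> \<sigma> g *\<^sub>v w \<in> W'"
      and W'_proper: "W' \<noteq> {0\<^sub>v k}" "W' \<noteq> carrier_vec k"
      and sum: "\<And>v. v \<in> carrier_vec k \<Longrightarrow> \<exists>w \<in> W. \<exists>w' \<in> W'. v = w + w'"
      using invariant_complement[OF W(1) W_inv W(2,3)] by blast
    have commute_on:
      "\<sigma> g *\<^sub>v (\<sigma> h *\<^sub>v u) = \<sigma> h *\<^sub>v (\<sigma> g *\<^sub>v u)"
      if U: "is_subspace k U" "U \<noteq> {0\<^sub>v k}" "U \<noteq> carrier_vec k"
        and U_inv: "\<And>g u. g \<in> carrier G \<Longrightarrow> u \<in> U \<Longrightarrow> \<sigma> g *\<^sub>v u \<in> U"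
        and "g \<in> carrier G" "h \<in> carrier G" "u \<in> U" for U g h u
    proof -
      obtain m S where "m < k" "is_rep G m S" "rep_kernel G k \<sigma> \<subseteq> rep_kernel G m S"
        and abelian: "\<And>g h u. abelian_image G S \<Longrightarrow> g \<in> carrier G \<Longrightarrow> h \<in> carrier G \<Longrightarrow> u \<in> U \<Longrightarrow>
          \<sigma> g *\<^sub>v (\<sigma> h *\<^sub>v u) = \<sigma> h *\<^sub>v (\<sigma> g *\<^sub>v u)"
        using subrepresentation[OF U(1) U_inv U(2,3)] by blast
      then have "abelian_image G S" using less.IH less.prems(2) none by blast
      then show ?thesis using abelian that by blast
    qed
    have "abelian_image G \<sigma>"
      unfolding abelian_image_def
    proof (intro ballI)
      fix g h assume g: "g \<in> carrier G" and h: "h \<in> carrier G"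
      have "W \<subseteq> carrier_vec k" "W' \<subseteq> carrier_vec k"
        using W(1) W'(1) unfolding is_subspace_def by auto
      then show "\<sigma> g * \<sigma> h = \<sigma> h * \<sigma> g"
        using commute_on[OF W(1-3) W_inv g h] commute_on[OF W' W'_proper W'_inv g h] sum
        by (intro mat_commute_of_commute_on_summands[OF rep_carrier[OF g] rep_carrier[OF h]])
    qed
    then show False using less.prems(3) by blast
  qed
qed
section \<open>A representation of a quotient group\<close>

definition regular_rep :: "('a, 'b) monoid_scheme \<Rightarrow> 'a list \<Rightarrow> 'a \<Rightarrow> complex mat" where
  "regular_rep H xs x = mat (length xs) (length xs) (\<lambda>(i, j). if xs ! i = x \<otimes>\<^bsub>H\<^esub> xs ! j then 1 else 0)"

context group
begin

lemma regular_rep_mult: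
  assumes xs: "distinct xs" "set xs = carrier G" and x: "x \<in> carrier G" and y: "y \<in> carrier G"
  shows "regular_rep G xs (x \<otimes> y) = regular_rep G xs x * regular_rep G xs y"
proof (rule eq_matI)
  let ?m = "length xs"
  fix i j assume "i < dim_row (regular_rep G xs x * regular_rep G xs y)"
    "j < dim_col (regular_rep G xs x * regular_rep G xs y)"
  then have i: "i < ?m" and j: "j < ?m" by (simp_all add: regular_rep_def)
  obtain l0 where l0: "l0 < ?m" "xs ! l0 = y \<otimes> xs ! j"
    using xs y j by (metis in_set_conv_nth m_closed nth_mem)
  have unique: "xs ! l = y \<otimes> xs ! j \<longleftrightarrow> l = l0" if "l < ?m" for l
    using l0 that xs(1) by (metis nth_eq_iff_index_eq)
  have "(regular_rep G xs x * regular_rep G xs y) $$ (i, j)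
      = (\<Sum>l<?m. (if xs ! i = x \<otimes> xs ! l then 1 else 0) * (if xs ! l = y \<otimes> xs ! j then 1 else 0))"
    using i j by (simp add: regular_rep_def scalar_prod_def atLeast0LessThan)
  also have "\<dots> = (\<Sum>l<?m. if l = l0 then (if xs ! i = x \<otimes> xs ! l then 1 else 0) else 0)"
    using unique by (intro sum.cong) auto
  also have "\<dots> = (if xs ! i = x \<otimes> (y \<otimes> xs ! j) then 1 else 0)"
    using l0 by (simp only: sum.delta finite_lessThan lessThan_iff if_True)
  finally show "regular_rep G xs (x \<otimes> y) $$ (i, j) = (regular_rep G xs x * regular_rep G xs y) $$ (i, j)"
    using i j x y xs nth_mem[OF j] by (simp add: regular_rep_def m_assoc)
qed (simp_all add: regular_rep_def)

lemma regular_rep_is_rep: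
  assumes xs: "distinct xs" "set xs = carrier G"
  shows "is_rep G (length xs) (regular_rep G xs)"
proof -
  have "xs ! j \<in> carrier G" if "j < length xs" for j using xs that nth_mem by blast
  then have "regular_rep G xs \<one> = 1\<^sub>m (length xs)"
    using xs by (intro eq_matI) (auto simp: regular_rep_def nth_eq_iff_index_eq)
  moreover have "0 < length xs" using xs by (metis length_pos_if_in_set one_closed)
  ultimately show ?thesis
    unfolding is_rep_def using regular_rep_mult[OF xs] by (auto simp: regular_rep_def)
qed

lemma regular_rep_inj:
  assumes xs: "distinct xs" "set xs = carrier G" and x: "x \<in> carrier G" and y: "y \<in> carrier G"
    and eq: "regular_rep G xs x = regular_rep G xs y"
  shows "x = y"
proof -
  obtain j where j: "j < length xs" "xs ! j = \<one>" using xs by (metis in_set_conv_nth one_closed)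
  obtain i where i: "i < length xs" "xs ! i = x" using xs x by (metis in_set_conv_nth)
  have "regular_rep G xs x $$ (i, j) = 1" using i j x by (simp add: regular_rep_def)
  then have "regular_rep G xs y $$ (i, j) = 1" using eq by simp
  then show ?thesis using i j y by (simp add: regular_rep_def split: if_splits)
qed

end

lemma is_rep_comp_hom:
  assumes "group G" "group H" "f \<in> hom G H" "is_rep H n R"
  shows "is_rep G n (\<lambda>g. R (f g))"
proof -
  interpret group_hom G H f using assms(1-3) by (simp add: group_hom_def group_hom_axioms_def)
  show ?thesis using assms(4) unfolding is_rep_def by (auto simp: hom_mult)
qed

lemma (in group) commutator_notin_of_not_derived_subset:
  assumes "subgroup H G" "\<not> derived G (carrier G) \<subseteq> H"
  obtains g h where "g \<in> carrier G" "h \<in> carrier G" "g \<otimes> h \<otimes> inv g \<otimes> inv h \<notin> H"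
  using assms generate_subgroup_incl[of "derived_set G (carrier G)" H] unfolding derived_def by blast

text \<open>The regular representation of \<open>G Mod H\<close>, pulled back to \<open>G\<close>.\<close>

lemma (in normal) exists_rep_nonabelian_kernel:
  assumes fin: "finite (carrier G)" and not_derived: "\<not> derived G (carrier G) \<subseteq> H"
  obtains m R where "is_rep G m R" "H \<subseteq> rep_kernel G m R" "\<not> abelian_image G R"
proof -
  interpret Q: group "G Mod H" by (rule factorgroup_is_group)
  have "finite (carrier (G Mod H))" using fin by (simp add: carrier_FactGroup)
  then obtain xs where xs: "distinct xs" "set xs = carrier (G Mod H)"
    using finite_distinct_list by metis
  define R where "R g = regular_rep (G Mod H) xs (H #> g)" for g
  have coset: "H #> g \<in> carrier (G Mod H)" if "g \<in> carrier G" for g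
    using r_coset_hom_Mod that by (auto simp: hom_def)
  have Q_rep: "is_rep (G Mod H) (length xs) (regular_rep (G Mod H) xs)"
    by (rule Q.regular_rep_is_rep[OF xs])
  have rep: "is_rep G (length xs) R"
    unfolding R_def by (rule is_rep_comp_hom[OF is_group Q.is_group r_coset_hom_Mod Q_rep])
  have "H \<subseteq> rep_kernel G (length xs) R"
  proof
    fix x assume "x \<in> H"
    then have "x \<in> carrier G" "H #> x = \<one>\<^bsub>G Mod H\<^esub>" by (simp_all add: rcos_const is_group)
    moreover have "regular_rep (G Mod H) xs \<one>\<^bsub>G Mod H\<^esub> = 1\<^sub>m (length xs)"
      using Q_rep unfolding is_rep_def by blast
    ultimately show "x \<in> rep_kernel G (length xs) R"
      unfolding R_def rep_kernel_def by simp
  qed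
  moreover have "\<not> abelian_image G R"
  proof
    assume abelian: "abelian_image G R"
    obtain g h where gh: "g \<in> carrier G" "h \<in> carrier G" "g \<otimes> h \<otimes> inv g \<otimes> inv h \<notin> H"
      using commutator_notin_of_not_derived_subset[OF subgroup_axioms not_derived] by blast
    have "R (g \<otimes> h) = R (h \<otimes> g)"
      using abelian gh rep unfolding abelian_image_def is_rep_def by metis
    then have "H #> (g \<otimes> h) = H #> (h \<otimes> g)"
      unfolding R_def using gh by (intro Q.regular_rep_inj[OF xs]) (simp_all add: coset)
    then have "(g \<otimes> h) \<otimes> inv (h \<otimes> g) \<in> H"
      using gh by (metis rcos_module_imp rcos_self is_group m_closed subgroup_axioms)
    then show False using gh by (simp add: inv_mult_group m_assoc)
  qed
  ultimately show ?thesis using that rep by blast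
qed

section \<open>Degree-one representations\<close>

lemma subspace_dim_one_trivial:
  assumes W: "is_subspace 1 W" and nonzero: "W \<noteq> {0\<^sub>v 1}"
  shows "W = carrier_vec 1"
proof
  show "W \<subseteq> carrier_vec 1" using W unfolding is_subspace_def by blast
  obtain w where w: "w \<in> W" "w \<noteq> 0\<^sub>v 1" using W nonzero unfolding is_subspace_def by blast
  then have wc: "w \<in> carrier_vec 1" using W unfolding is_subspace_def by blast
  have "w $ 0 \<noteq> 0"
  proof
    assume "w $ 0 = 0"
    then have "w = 0\<^sub>v 1" using wc by (intro eq_vecI) (simp_all add: less_Suc_eq)
    then show False using w(2) by simp
  qed
  show "carrier_vec 1 \<subseteq> W"
  proof
    fix v :: "complex vec" assume v: "v \<in> carrier_vec 1"
    then have "v = (v $ 0 / w $ 0) \<cdot>\<^sub>v w"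
      using wc \<open>w $ 0 \<noteq> 0\<close> by (intro eq_vecI) (simp_all add: less_Suc_eq)
    moreover have "(v $ 0 / w $ 0) \<cdot>\<^sub>v w \<in> W" using W w(1) unfolding is_subspace_def by blast
    ultimately show "v \<in> W" by simp
  qed
qed

lemma is_irr_rep_degree_one: "is_rep G 1 R \<Longrightarrow> is_irr_rep G 1 R"
  unfolding is_irr_rep_def using subspace_dim_one_trivial by blast

lemma abelian_image_degree_one:
  assumes "is_rep G 1 R"
  shows "abelian_image G R"
proof -
  have "A * B = B * A" if "A \<in> carrier_mat 1 1" "B \<in> carrier_mat 1 (1 :: nat)" for A B :: "complex mat"
    using that by (intro eq_matI) (simp_all add: scalar_prod_def mult.commute)
  then show ?thesis using assms unfolding abelian_image_def is_rep_def by blast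
qed

lemma character_of_one_eq_degree: "group G \<Longrightarrow> is_rep G n R \<Longrightarrow> character_of G R \<one>\<^bsub>G\<^esub> = of_nat n"
  unfolding is_rep_def by (simp add: character_of_eq group.is_monoid monoid.one_closed)

lemma degree_in_cd:
  assumes "group G" "is_irr_rep G n R"
  shows "of_nat n \<in> cd G"
proof -
  have "character_of G R \<one>\<^bsub>G\<^esub> = of_nat n"
    using assms character_of_one_eq_degree is_irr_rep_is_rep by blast
  then show ?thesis unfolding cd_def
    by (intro image_eqI[where x = "character_of G R"] character_of_in_Irr[OF assms(2)]) simp
qed

lemma degree_eq_if_card_cd_2:
  assumes G: "group G" and cd: "card (cd G) = 2"
    and "is_irr_rep G n R" "is_irr_rep G d T" "n \<noteq> 1" "d \<noteq> 1"
  shows "n = d"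
proof (rule ccontr)
  assume "n \<noteq> d"
  have "is_irr_rep G 1 (\<lambda>_. 1\<^sub>m 1)" using G by (intro is_irr_rep_degree_one) (simp add: is_rep_def)
  then have "{of_nat 1, of_nat n, of_nat d} \<subseteq> cd G" using assms degree_in_cd by blast
  moreover have "finite (cd G)" using cd card.infinite by fastforce
  ultimately have "card {1, of_nat n, of_nat d :: complex} \<le> 2" using cd card_mono by fastforce
  then show False using \<open>n \<noteq> d\<close> assms(5,6) by simp
qed

lemma (in group) commutator_mult_swap:
  assumes "z \<in> carrier G" "g \<in> carrier G"
  shows "(z \<otimes> g \<otimes> inv z \<otimes> inv g) \<otimes> (g \<otimes> z) = z \<otimes> g"
proof -
  have "inv g \<otimes> (g \<otimes> z) = z" using assms by (simp add: m_assoc[symmetric])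
  then show ?thesis using assms by (simp add: m_assoc)
qed

lemma (in finite_group_irr_rep) subset_char_center_if_commutators_in_kernel:
  assumes Z: "Z \<subseteq> carrier G" and comm: "comm_subgroup G Z (carrier G) \<subseteq> rep_kernel G n R"
  shows "Z \<subseteq> char_center G (character_of G R)"
proof
  fix z assume "z \<in> Z"
  then have z: "z \<in> carrier G" using Z by blast
  have "R z * R g = R g * R z" if g: "g \<in> carrier G" for g
  proof -
    let ?c = "z \<otimes> g \<otimes> inv z \<otimes> inv g"
    have "?c \<in> comm_subgroup G Z (carrier G)"
      unfolding comm_subgroup_def using \<open>z \<in> Z\<close> g by (intro generate.incl) blast
    then have c: "?c \<in> carrier G" "R ?c = 1\<^sub>m n" using comm unfolding rep_kernel_def by auto
    have "R z * R g = R ?c * R (g \<otimes> z)"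
      using z g c(1) by (simp flip: rep_mult add: commutator_mult_swap)
    also have "\<dots> = R g * R z" using z g c(2) by (simp add: rep_mult)
    finally show ?thesis .
  qed
  then show "z \<in> char_center G (character_of G R)" by (rule in_char_center_if_commuting[OF z])
qed

theorem mainTheorem7:
  fixes G :: "('g, 'b) monoid_scheme" and N :: "'g set" and \<chi> :: "'g \<Rightarrow> complex"
  assumes "group G" and "finite (carrier G)"
    and "GVZ G" and "card (cd G) = 2"
    and "N \<lhd> G" and "\<chi> \<in> nl G"
    and "\<not> derived G (carrier G) \<subseteq> N"
    and "comm_subgroup G (char_center G \<chi>) (carrier G) \<subseteq> N"
  shows "N \<subseteq> char_center G \<chi>"
proof -
  obtain n \<rho> where \<rho>: "is_irr_rep G n \<rho>" and \<chi>: "\<chi> = character_of G \<rho>"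
    using assms(6) unfolding nl_def Irr_def by blast
  have "n \<noteq> 1"
    using assms(6) character_of_one_eq_degree[OF assms(1) is_irr_rep_is_rep[OF \<rho>]]
    unfolding nl_def \<chi> by auto
  obtain k \<sigma> where "is_rep G k \<sigma>" "N \<subseteq> rep_kernel G k \<sigma>" "\<not> abelian_image G \<sigma>"
    using normal.exists_rep_nonabelian_kernel[OF assms(5,2,7)] by blast
  then obtain d \<tau> where \<tau>: "is_irr_rep G d \<tau>" "N \<subseteq> rep_kernel G d \<tau>" "\<not> abelian_image G \<tau>"
    using exists_irr_rep_nonabelian_image[OF assms(1,2)] by blast
  have "d \<noteq> 1" using \<tau>(3) abelian_image_degree_one is_irr_rep_is_rep[OF \<tau>(1)] by blast
  then have "n = d" using degree_eq_if_card_cd_2[OF assms(1,4) \<rho> \<tau>(1)] \<open>n \<noteq> 1\<close> by blast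
  interpret \<rho>: finite_group_irr_rep G n \<rho> using finite_group_irr_repI assms(1,2) \<rho> by blast
  interpret \<tau>: finite_group_irr_rep G d \<tau> using finite_group_irr_repI assms(1,2) \<tau>(1) by blast
  let ?Z\<psi> = "char_center G (character_of G \<tau>)"
  have "card (char_center G \<chi>) = card ?Z\<psi>"
    using \<rho>.card_char_center_GVZ[OF assms(3)] \<tau>.card_char_center_GVZ[OF assms(3)] \<rho>.degree_pos
    unfolding \<chi> \<open>n = d\<close> by (metis mult_right_cancel power_not_zero not_gr0)
  moreover have "char_center G \<chi> \<subseteq> ?Z\<psi>"
    using assms(8) \<tau>(2) by (intro \<tau>.subset_char_center_if_commutators_in_kernel) (auto simp: char_center_def)
  moreover have "finite ?Z\<psi>" using assms(2) unfolding char_center_def by simp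
  ultimately have "char_center G \<chi> = ?Z\<psi>" using card_subset_eq by blast
  then show ?thesis using \<tau>(2) \<tau>.rep_kernel_subset_char_center by blast
qed

end
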